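(* Let $A\in\mathbb{C}^{m\times n}$ and $X\in\mathbb{C}^{n\times m}$. Then the following are equivalent: (1) $A^{\mathfrak{m}}$ exists and $X=A^{\mathfrak{m}}$; (2) $XAa=a$ for all $a\in\mathcal{R}(A^{\sim})$, and $Xb=0$ for all $b\in\mathcal{N}(A^{\sim})$; (3) $AX=P_{\mathcal{R}(A),\mathcal{N}(A^{\sim})}$, $XA=P_{\mathcal{R}(X),\mathcal{N}(A)}$, and $\mathcal{R}(X)\subseteq\mathcal{R}(A^{\sim})$.
   Context: For a positive integer $k$, the Minkowski metric matrix of order $k$ is $G_k=\mathrm{diag}(1,-I_{k-1})$ (with $G_1=(1)$). For $A\in\mathbb{C}^{m\times n}$, the Minkowski adjoint is $A^{\sim}=G_nA^*G_m$, where $A^*$ is the conjugate transpose. The Minkowski inverse of $A$, denoted $A^{\mathfrak{m}}$, is a matrix $X\in\mathbb{C}^{n\times m}$ with $AXA=A$, $XAX=X$, $(AX)^{\sim}=AX$, $(XA)^{\sim}=XA$ (unique if it exists). $\mathcal{R}(\cdot)$, $\mathcal{N}(\cdot)$ denote range and null space. For subspaces $\mathcal{S},\mathcal{T}$ of $\mathbb{C}^k$ with $\mathcal{S}\oplus\mathcal{T}=\mathbb{C}^k$, $P_{\mathcal{S},\mathcal{T}}$ denotes the projector onto $\mathcal{S}$ along $\mathcal{T}$ (statement (3) includes that the relevant direct sums hold). *)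

theory Defs
  imports "Jordan_Normal_Form.Schur_Decomposition" "Jordan_Normal_Form.Matrix_Kernel"
begin

definition minkowski_G :: "nat \<Rightarrow> complex mat" where
  "minkowski_G k = mat k k (\<lambda>(i,j). if i = j then (if i = 0 then 1 else -1) else 0)"

definition mink_adj :: "complex mat \<Rightarrow> complex mat" where
  "mink_adj A = minkowski_G (dim_col A) * mat_adjoint A * minkowski_G (dim_row A)"

definition is_minkowski_inverse :: "complex mat \<Rightarrow> complex mat \<Rightarrow> bool" where
  "is_minkowski_inverse A X \<longleftrightarrow>
     X \<in> carrier_mat (dim_col A) (dim_row A) \<and>
     A * X * A = A \<and> X * A * X = X \<and>
     mink_adj (A * X) = A * X \<and> mink_adj (X * A) = X * A"

definition mink_inverse_exists :: "complex mat \<Rightarrow> bool" where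
  "mink_inverse_exists A \<longleftrightarrow> (\<exists>X. is_minkowski_inverse A X)"

definition mink_inverse :: "complex mat \<Rightarrow> complex mat" where
  "mink_inverse A = (THE X. is_minkowski_inverse A X)"

definition mat_range :: "complex mat \<Rightarrow> complex vec set" where
  "mat_range A = {A *\<^sub>v x | x. x \<in> carrier_vec (dim_col A)}"

definition direct_sum_space :: "nat \<Rightarrow> complex vec set \<Rightarrow> complex vec set \<Rightarrow> bool" where
  "direct_sum_space k S T \<longleftrightarrow>
     S \<subseteq> carrier_vec k \<and> T \<subseteq> carrier_vec k \<and>
     (\<forall>v \<in> carrier_vec k. \<exists>s\<in>S. \<exists>t\<in>T. v = s + t) \<and>
     S \<inter> T = {0\<^sub>v k}"

definition is_projector :: "nat \<Rightarrow> complex mat \<Rightarrow> complex vec set \<Rightarrow> complex vec set \<Rightarrow> bool" where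
  "is_projector k P S T \<longleftrightarrow>
     direct_sum_space k S T \<and> P \<in> carrier_mat k k \<and>
     (\<forall>s\<in>S. P *\<^sub>v s = s) \<and> (\<forall>t\<in>T. P *\<^sub>v t = 0\<^sub>v k)"

end

(*
  The Minkowski adjoint is an involutive anti-automorphism, and a square matrix P with
  P~ P = P~ is self-adjoint. Conditions (3) say that AX and XA are idempotents with
  R(AX) = R(A), N(AX) = N(A~), R(XA) = R(X), N(XA) = N(A); together with R(X) \<subseteq> R(A~)
  this is equivalent to the four Penrose equations. Under (2), XA fixes the columns of A~,
  and taking adjoints gives AXA = A and (XA)~ = XA. The remaining equations follow once
  A~ = A~AW for some W. Since X vanishes on N(A~), the matrix M = A~A + I - XA is injective,
  hence invertible, and XA M = A~A; so W = M^-1 A~ works, as A~ = XA A~.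
*)

theory Submission
  imports Defs
begin

section \<open>Minkowski adjoint\<close>

definition mink_sign :: "nat \<Rightarrow> complex" where
  "mink_sign i = (if i = 0 then 1 else -1)"

lemma mink_sign_square [simp]: "mink_sign i * mink_sign i = 1"
  by (simp add: mink_sign_def)

lemma mink_sign_square_left [simp]: "mink_sign i * (mink_sign i * x) = x"
  by (simp add: mink_sign_def)

lemma cnj_mink_sign [simp]: "cnj (mink_sign i) = mink_sign i"
  by (simp add: mink_sign_def)

lemma diagonal_mult_mat:
  fixes d :: "nat \<Rightarrow> 'a :: comm_ring_1"
  assumes "M \<in> carrier_mat k q"
  shows "mat k k (\<lambda>(i,j). if i = j then d i else 0) * M =
         mat k q (\<lambda>(i,j). d i * M $$ (i,j))"
  using assms
  by (intro eq_matI)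
    (auto simp: scalar_prod_def if_distrib[where f = "\<lambda>a. a * y" for y] sum.delta cong: if_cong)

lemma mult_diagonal_mat:
  fixes d :: "nat \<Rightarrow> 'a :: comm_ring_1"
  assumes "M \<in> carrier_mat q k"
  shows "M * mat k k (\<lambda>(i,j). if i = j then d i else 0) =
         mat q k (\<lambda>(i,j). M $$ (i,j) * d j)"
  using assms by (intro eq_matI) (auto simp: scalar_prod_def if_distrib sum.delta' cong: if_cong)

lemma mink_adj_mat:
  "mink_adj A = mat (dim_col A) (dim_row A) (\<lambda>(i,j). mink_sign i * mink_sign j * cnj (A $$ (j,i)))"
proof -
  have G: "minkowski_G k = mat k k (\<lambda>(i,j). if i = j then mink_sign i else 0)" for k
    unfolding minkowski_G_def mink_sign_def by (rule eq_matI) auto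
  have "mat_adjoint A = mat (dim_col A) (dim_row A) (\<lambda>(i,j). cnj (A $$ (j,i)))"
    unfolding mat_adjoint_def by (rule eq_matI) (auto simp: mat_of_rows_index)
  then show ?thesis
    unfolding mink_adj_def G by (subst diagonal_mult_mat mult_diagonal_mat, force)+ (rule eq_matI, auto)
qed

lemma mink_adj_dims [simp]:
  "dim_row (mink_adj A) = dim_col A" "dim_col (mink_adj A) = dim_row A"
  by (simp_all add: mink_adj_mat)

lemma mink_adj_carrier [simp]: "A \<in> carrier_mat m n \<Longrightarrow> mink_adj A \<in> carrier_mat n m"
  by (metis carrier_matD carrier_matI mink_adj_dims)

lemma mink_adj_index:
  "i < dim_col A \<Longrightarrow> j < dim_row A \<Longrightarrow>
   mink_adj A $$ (i,j) = mink_sign i * mink_sign j * cnj (A $$ (j,i))"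
  by (simp add: mink_adj_mat)

lemma mink_adj_mink_adj [simp]: "mink_adj (mink_adj A) = A"
  by (rule eq_matI) (auto simp: mink_adj_index)

lemma mink_adj_mult:
  assumes "A \<in> carrier_mat p q" "B \<in> carrier_mat q r"
  shows "mink_adj (A * B) = mink_adj B * mink_adj A"
proof (rule eq_matI)
  fix i j assume "i < dim_row (mink_adj B * mink_adj A)" "j < dim_col (mink_adj B * mink_adj A)"
  with assms have "i < r" "j < p" by auto
  with assms have "mink_adj (A * B) $$ (i,j) =
      mink_sign i * mink_sign j * cnj (\<Sum>k<q. A $$ (j,k) * B $$ (k,i))"
    by (simp add: mink_adj_index scalar_prod_def lessThan_atLeast0)
  also have "\<dots> = (\<Sum>k<q. (mink_sign i * mink_sign k * cnj (B $$ (k,i))) *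
                              (mink_sign k * mink_sign j * cnj (A $$ (j,k))))"
    by (simp add: sum_distrib_left mult_ac)
  also have "\<dots> = (mink_adj B * mink_adj A) $$ (i,j)"
    using assms \<open>i < r\<close> \<open>j < p\<close>
    by (simp add: mink_adj_index scalar_prod_def lessThan_atLeast0)
  finally show "mink_adj (A * B) $$ (i,j) = (mink_adj B * mink_adj A) $$ (i,j)" .
qed (use assms in auto)

lemma mink_adj_eq_if_mink_adj_mult_eq:
  assumes "P \<in> carrier_mat k k" and "mink_adj P * P = mink_adj P"
  shows "mink_adj P = P"
proof -
  have "P = mink_adj (mink_adj P * P)"
    using assms(2) by simp
  also have "\<dots> = mink_adj P * P"
    using mink_adj_mult[OF mink_adj_carrier[OF assms(1)] assms(1)] by simp
  finally show ?thesis
    using assms(2) by simp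
qed

section \<open>Ranges, kernels and projectors\<close>

lemma mult_mat_assoc_dims:
  "dim_col A = dim_row B \<Longrightarrow> dim_col B = dim_row C \<Longrightarrow> A * B * C = A * (B * C)"
  by (rule assoc_mult_mat[of A "dim_row A" "dim_col A" B "dim_col B" C "dim_col C"]) auto

lemma mat_eq_on_vecI:
  fixes M N :: "'a :: comm_ring_1 mat"
  assumes "M \<in> carrier_mat p q" "N \<in> carrier_mat p q"
    and "\<And>v. v \<in> carrier_vec q \<Longrightarrow> M *\<^sub>v v = N *\<^sub>v v"
  shows "M = N"
proof (rule eq_matI)
  fix i j assume "i < dim_row N" "j < dim_col N"
  with assms have ij: "i < p" "j < q"
    by auto
  have "M $$ (i,j) = (M *\<^sub>v unit_vec q j) $ i"
    using assms(1) ij by simp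
  also have "\<dots> = (N *\<^sub>v unit_vec q j) $ i"
    using assms(3)[of "unit_vec q j"] by simp
  also have "\<dots> = N $$ (i,j)"
    using assms(2) ij by simp
  finally show "M $$ (i,j) = N $$ (i,j)" .
qed (use assms in auto)

lemma vec_eq_if_minus_eq_zero:
  fixes u v :: "'a :: ab_group_add vec"
  assumes "u \<in> carrier_vec n" "v \<in> carrier_vec n" "u - v = 0\<^sub>v n"
  shows "u = v"
proof (rule eq_vecI)
  fix i assume "i < dim_vec v"
  then have "(u - v) $ i = 0"
    using assms by simp
  with assms(1,2) \<open>i < dim_vec v\<close> show "u $ i = v $ i"
    by simp
qed (use assms in simp)

lemma mult_mat_vec_eq_if_kernel_subset:
  fixes C E :: "complex mat"
  assumes C: "C \<in> carrier_mat p k" and E: "E \<in> carrier_mat q k"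
    and ker: "mat_kernel C \<subseteq> mat_kernel E"
    and x: "x \<in> carrier_vec k" and y: "y \<in> carrier_vec k" and eq: "C *\<^sub>v x = C *\<^sub>v y"
  shows "E *\<^sub>v x = E *\<^sub>v y"
proof -
  have "C *\<^sub>v (x - y) = 0\<^sub>v p"
    using C x y eq by (simp add: mult_minus_distrib_mat_vec)
  with C x y have "x - y \<in> mat_kernel C"
    by (intro mat_kernelI) auto
  with ker have "x - y \<in> mat_kernel E"
    by blast
  then have "E *\<^sub>v (x - y) = 0\<^sub>v q"
    using mat_kernelD[OF E] by blast
  then have "E *\<^sub>v x - E *\<^sub>v y = 0\<^sub>v q"
    using mult_minus_distrib_mat_vec[OF E x y] by simp
  then show ?thesis
    using E x y by (metis vec_eq_if_minus_eq_zero mult_mat_vec_carrier)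
qed

lemma mult_eq_if_kernel_subset:
  fixes C D E :: "complex mat"
  assumes C: "C \<in> carrier_mat p k" and D: "D \<in> carrier_mat k k" and E: "E \<in> carrier_mat q k"
    and CD: "C * D = C" and ker: "mat_kernel C \<subseteq> mat_kernel E"
  shows "E * D = E"
proof (rule mat_eq_on_vecI)
  fix w :: "complex vec" assume w: "w \<in> carrier_vec k"
  have "C *\<^sub>v (D *\<^sub>v w) = C *\<^sub>v w"
    using assoc_mult_mat_vec[OF C D w] CD by simp
  then have "E *\<^sub>v (D *\<^sub>v w) = E *\<^sub>v w"
    using D w by (metis mult_mat_vec_eq_if_kernel_subset[OF C E ker] mult_mat_vec_carrier)
  then show "(E * D) *\<^sub>v w = E *\<^sub>v w"
    using assoc_mult_mat_vec[OF E D w] by simp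
qed (use D E in auto)

lemma mat_rangeI: "A \<in> carrier_mat p q \<Longrightarrow> x \<in> carrier_vec q \<Longrightarrow> A *\<^sub>v x \<in> mat_range A"
  unfolding mat_range_def by auto

lemma mat_rangeE:
  assumes "a \<in> mat_range A" "A \<in> carrier_mat p q"
  obtains x where "x \<in> carrier_vec q" "a = A *\<^sub>v x"
  using assms unfolding mat_range_def by auto

lemma mat_range_mult_subset:
  assumes "A \<in> carrier_mat p q" "C \<in> carrier_mat q r"
  shows "mat_range (A * C) \<subseteq> mat_range A"
proof
  fix a assume "a \<in> mat_range (A * C)"
  then obtain x where "x \<in> carrier_vec r" "a = (A * C) *\<^sub>v x"
    using assms by (auto elim: mat_rangeE)
  with assms show "a \<in> mat_range A"
    by (auto intro: mat_rangeI)
qed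

lemma mat_range_subset_factor:
  assumes A: "A \<in> carrier_mat p q" and C: "C \<in> carrier_mat p r"
    and sub: "mat_range A \<subseteq> mat_range C"
  obtains Y where "Y \<in> carrier_mat r q" "A = C * Y"
proof -
  have "\<exists>y. y \<in> carrier_vec r \<and> col A j = C *\<^sub>v y" if "j < q" for j
  proof -
    have "col A j = A *\<^sub>v unit_vec q j"
      using A that by (intro eq_vecI) auto
    then have "col A j \<in> mat_range C"
      using sub mat_rangeI[OF A unit_vec_carrier] by auto
    with C show ?thesis
      by (auto elim: mat_rangeE)
  qed
  then obtain y where y: "\<And>j. j < q \<Longrightarrow> y j \<in> carrier_vec r \<and> col A j = C *\<^sub>v y j"
    by metis
  define Y where "Y = mat r q (\<lambda>(i,j). y j $ i)"
  have Y: "Y \<in> carrier_mat r q"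
    by (simp add: Y_def)
  have "col Y j = y j" if "j < q" for j
    using y[OF that] that unfolding Y_def by (intro eq_vecI) auto
  then have "A = C * Y"
    using A C Y y by (intro mat_col_eqI) (auto simp: col_mult2)
  with Y show ?thesis
    using that by blast
qed

lemma mult_eq_if_fixes_range:
  fixes P A :: "complex mat"
  assumes P: "P \<in> carrier_mat k k" and A: "A \<in> carrier_mat k n"
    and fix_range: "\<And>a. a \<in> mat_range A \<Longrightarrow> P *\<^sub>v a = a"
  shows "P * A = A"
proof (rule mat_eq_on_vecI)
  fix x :: "complex vec" assume "x \<in> carrier_vec n"
  with P A fix_range[of "A *\<^sub>v x"] show "(P * A) *\<^sub>v x = A *\<^sub>v x"
    by (simp add: mat_rangeI)
qed (use P A in auto)

lemma mult_eq_if_range_subset: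
  assumes P: "P \<in> carrier_mat k k" and C: "C \<in> carrier_mat k r" and A: "A \<in> carrier_mat k n"
    and PC: "P * C = C" and sub: "mat_range A \<subseteq> mat_range C"
  shows "P * A = A"
proof -
  obtain Y where Y: "Y \<in> carrier_mat r n" and AY: "A = C * Y"
    using mat_range_subset_factor[OF A C sub] .
  have "P * (C * Y) = C * Y"
    using P C Y PC by (metis assoc_mult_mat)
  with AY show ?thesis
    by simp
qed

lemma idempotent_fixes_range:
  fixes P :: "complex mat"
  assumes P: "P \<in> carrier_mat k k" and idem: "P * P = P" and s: "s \<in> mat_range P"
  shows "P *\<^sub>v s = s"
proof -
  obtain u where u: "u \<in> carrier_vec k" "s = P *\<^sub>v u"
    using s P by (auto elim: mat_rangeE)
  then have "P *\<^sub>v s = (P * P) *\<^sub>v u"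
    using assoc_mult_mat_vec[OF P P u(1)] by simp
  with idem u show ?thesis
    by simp
qed

lemma is_projector_range_kernel:
  fixes P :: "complex mat"
  assumes P: "P \<in> carrier_mat k k" and idem: "P * P = P"
  shows "is_projector k P (mat_range P) (mat_kernel P)"
  unfolding is_projector_def direct_sum_space_def
proof (intro conjI ballI subsetI)
  fix v :: "complex vec" assume v: "v \<in> carrier_vec k"
  have Pv: "P *\<^sub>v v \<in> carrier_vec k"
    using P v by simp
  have "P *\<^sub>v (v - P *\<^sub>v v) = P *\<^sub>v v - P *\<^sub>v (P *\<^sub>v v)"
    using mult_minus_distrib_mat_vec[OF P v Pv] .
  also have "P *\<^sub>v (P *\<^sub>v v) = P *\<^sub>v v"
    using idempotent_fixes_range[OF P idem mat_rangeI[OF P v]] .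
  finally have "P *\<^sub>v (v - P *\<^sub>v v) = 0\<^sub>v k"
    using Pv by simp
  then have "v - P *\<^sub>v v \<in> mat_kernel P"
    using P v Pv by (intro mat_kernelI[OF P]) auto
  moreover have "v = P *\<^sub>v v + (v - P *\<^sub>v v)"
    using P v by (intro eq_vecI) auto
  ultimately show "\<exists>s\<in>mat_range P. \<exists>t\<in>mat_kernel P. v = s + t"
    using mat_rangeI[OF P v] by blast
next
  show "mat_range P \<inter> mat_kernel P = {0\<^sub>v k}"
  proof (intro equalityI subsetI)
    fix s :: "complex vec" assume s: "s \<in> mat_range P \<inter> mat_kernel P"
    then have "s = P *\<^sub>v s"
      using idempotent_fixes_range[OF P idem] by auto
    also have "\<dots> = 0\<^sub>v k"
      using s mat_kernelD(2)[OF P] by auto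
    finally show "s \<in> {0\<^sub>v k}"
      by simp
  next
    fix s :: "complex vec" assume "s \<in> {0\<^sub>v k}"
    moreover have "P *\<^sub>v 0\<^sub>v k = 0\<^sub>v k"
      using P by auto
    ultimately show "s \<in> mat_range P \<inter> mat_kernel P"
      using mat_rangeI[OF P, of "0\<^sub>v k"] by (auto intro: mat_kernelI[OF P])
  qed
qed (use P idempotent_fixes_range[OF P idem] in \<open>auto elim: mat_rangeE dest: mat_kernelD\<close>)

lemma is_projector_decompose:
  fixes P :: "complex mat"
  assumes proj: "is_projector k P S T" and v: "v \<in> carrier_vec k"
  obtains s t where "s \<in> S" "t \<in> T" "v = s + t" "P *\<^sub>v v = s"
proof -
  have P: "P \<in> carrier_mat k k" and ST: "S \<subseteq> carrier_vec k" "T \<subseteq> carrier_vec k"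
    using proj unfolding is_projector_def direct_sum_space_def by auto
  obtain s t where st: "s \<in> S" "t \<in> T" "v = s + t"
    using proj v unfolding is_projector_def direct_sum_space_def by blast
  have s: "s \<in> carrier_vec k" and t: "t \<in> carrier_vec k"
    using st ST by auto
  then have "P *\<^sub>v v = P *\<^sub>v s + P *\<^sub>v t"
    using st(3) mult_add_distrib_mat_vec[OF P] by simp
  also have "\<dots> = s"
    using proj st s unfolding is_projector_def by simp
  finally show ?thesis
    using that st by blast
qed

lemma is_projector_imp_idempotent:
  fixes P :: "complex mat"
  assumes proj: "is_projector k P S T"
  shows "P * P = P" "S = mat_range P" "T = mat_kernel P"
proof -
  have P: "P \<in> carrier_mat k k" and ST: "S \<subseteq> carrier_vec k" "T \<subseteq> carrier_vec k"
    and fixS: "\<And>s. s \<in> S \<Longrightarrow> P *\<^sub>v s = s"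
    and killT: "\<And>t. t \<in> T \<Longrightarrow> P *\<^sub>v t = 0\<^sub>v k"
    using proj unfolding is_projector_def direct_sum_space_def by auto
  show "S = mat_range P"
  proof (intro equalityI subsetI)
    fix s assume "s \<in> S"
    with ST fixS mat_rangeI[OF P, of s] show "s \<in> mat_range P"
      by auto
  next
    fix s assume "s \<in> mat_range P"
    with P is_projector_decompose[OF proj] show "s \<in> S"
      by (metis mat_rangeE)
  qed
  show "T = mat_kernel P"
  proof (intro equalityI subsetI)
    fix t assume "t \<in> T"
    with ST killT show "t \<in> mat_kernel P"
      by (auto intro: mat_kernelI[OF P])
  next
    fix v assume v: "v \<in> mat_kernel P"
    then obtain s t where st: "s \<in> S" "t \<in> T" "v = s + t" "P *\<^sub>v v = s"
      using is_projector_decompose[OF proj] mat_kernelD(1)[OF P] by metis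
    then have "s = 0\<^sub>v k"
      using v mat_kernelD(2)[OF P] by simp
    with st ST show "v \<in> T"
      by auto
  qed
  show "P * P = P"
  proof (rule mat_eq_on_vecI[OF mult_carrier_mat[OF P P] P])
    fix v :: "complex vec" assume v: "v \<in> carrier_vec k"
    then obtain s where "s \<in> S" "P *\<^sub>v v = s"
      using is_projector_decompose[OF proj] by metis
    with P ST fixS v show "(P * P) *\<^sub>v v = P *\<^sub>v v"
      by auto
  qed
qed

lemma idempotent_right_factor_if_kernel_subset:
  fixes Q N :: "complex mat"
  assumes Q: "Q \<in> carrier_mat n n" and N: "N \<in> carrier_mat n n"
    and idem: "Q * Q = Q" and QN: "Q * N = N" and ker: "mat_kernel N \<subseteq> mat_kernel Q"
  obtains Z where "Z \<in> carrier_mat n n" "N * Z = Q"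
proof -
  define M where "M = N + (1\<^sub>m n - Q)"
  have IQ: "1\<^sub>m n - Q \<in> carrier_mat n n"
    using minus_carrier_mat[OF Q] .
  have M: "M \<in> carrier_mat n n"
    using N IQ unfolding M_def by simp
  have "Q * M = Q * N + (Q * 1\<^sub>m n - Q * Q)"
    unfolding M_def mult_add_distrib_mat[OF Q N IQ] mult_minus_distrib_mat[OF Q one_carrier_mat Q] ..
  then have QM: "Q * M = N"
    using Q N idem QN by simp
  have "v = 0\<^sub>v n" if v: "v \<in> carrier_vec n" and Mv: "M *\<^sub>v v = 0\<^sub>v n" for v
  proof -
    have "N *\<^sub>v v = Q *\<^sub>v (M *\<^sub>v v)"
      using assoc_mult_mat_vec[OF Q M v] QM by simp
    with Q Mv have "v \<in> mat_kernel N"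
      by (intro mat_kernelI[OF N v]) auto
    with ker have Qv: "Q *\<^sub>v v = 0\<^sub>v n"
      using mat_kernelD(2)[OF Q] by blast
    have "M *\<^sub>v v = N *\<^sub>v v + (v - Q *\<^sub>v v)"
      using v unfolding M_def add_mult_distrib_mat_vec[OF N IQ v]
        minus_mult_distrib_mat_vec[OF one_carrier_mat Q v]
      by simp
    with Mv Qv \<open>v \<in> mat_kernel N\<close> mat_kernelD(2)[OF N] v show ?thesis
      by simp
  qed
  then have "det M \<noteq> 0"
    using det_0_iff_vec_prod_zero[OF M] by blast
  from det_non_zero_imp_unit[OF M this, of undefined]
  obtain Z where Z: "Z \<in> carrier_mat n n" and MZ: "M * Z = 1\<^sub>m n"
    unfolding Units_def ring_mat_def by auto
  have "N * Z = Q * (M * Z)"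
    using Q M Z QM by (simp flip: assoc_mult_mat)
  with Q MZ have "N * Z = Q"
    by simp
  with Z that show ?thesis
    by blast
qed

section \<open>Minkowski inverses\<close>

lemma mink_adj_eq_if_idempotent:
  fixes P :: "complex mat"
  assumes P: "P \<in> carrier_mat k k" and idem: "P * P = P"
    and ker: "mat_kernel P \<subseteq> mat_kernel (mink_adj P)"
  shows "mink_adj P = P"
  using P mult_eq_if_kernel_subset[OF P P mink_adj_carrier[OF P] idem ker]
  by (rule mink_adj_eq_if_mink_adj_mult_eq)

lemma is_minkowski_inverse_carrier:
  "A \<in> carrier_mat m n \<Longrightarrow> is_minkowski_inverse A X \<Longrightarrow> X \<in> carrier_mat n m"
  unfolding is_minkowski_inverse_def by simp

lemma is_minkowski_inverseD:
  assumes A: "A \<in> carrier_mat m n" and inv: "is_minkowski_inverse A X"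
  shows "X * A * mink_adj A = mink_adj A"
    and "mink_adj A * (A * X) = mink_adj A"
    and "mat_kernel (mink_adj A) \<subseteq> mat_kernel X"
    and "mat_range X \<subseteq> mat_range (mink_adj A)"
proof -
  have X: "X \<in> carrier_mat n m"
    using is_minkowski_inverse_carrier[OF A inv] .
  have AXA: "A * X * A = A" and XAX: "X * A * X = X"
    and AX: "mink_adj (A * X) = A * X" and XA: "mink_adj (X * A) = X * A"
    using inv unfolding is_minkowski_inverse_def by auto
  note assoc = mult_mat_assoc_dims carrier_matD[OF A] carrier_matD[OF X]
  have "X * A * mink_adj A = mink_adj (X * A) * mink_adj A"
    by (simp only: XA)
  also have "\<dots> = mink_adj (A * X * A)"
    using mink_adj_mult[OF A mult_carrier_mat[OF X A]] by (simp add: assoc)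
  finally show "X * A * mink_adj A = mink_adj A"
    by (simp only: AXA)
  have "mink_adj A * (A * X) = mink_adj A * mink_adj (A * X)"
    by (simp only: AX)
  also have "\<dots> = mink_adj (A * X * A)"
    using mink_adj_mult[OF mult_carrier_mat[OF A X] A] by simp
  finally show "mink_adj A * (A * X) = mink_adj A"
    by (simp only: AXA)
  have "X * mink_adj X * mink_adj A = X"
    using XAX AX mink_adj_mult[OF A X] by (simp add: assoc)
  moreover have "mat_kernel (mink_adj A) \<subseteq> mat_kernel (X * mink_adj X * mink_adj A)"
    using mink_adj_carrier[OF A] mink_adj_carrier[OF X] X by (intro mat_kernel_mult_subset) auto
  ultimately show "mat_kernel (mink_adj A) \<subseteq> mat_kernel X"
    by simp
  have "mink_adj A * (mink_adj X * X) = mink_adj (X * A) * X"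
    using mink_adj_mult[OF X A] by (simp add: assoc)
  also have "\<dots> = X"
    using XA XAX by simp
  finally have "mink_adj A * (mink_adj X * X) = X" .
  moreover have "mat_range (mink_adj A * (mink_adj X * X)) \<subseteq> mat_range (mink_adj A)"
    using mink_adj_carrier[OF A] mink_adj_carrier[OF X] X by (intro mat_range_mult_subset) auto
  ultimately show "mat_range X \<subseteq> mat_range (mink_adj A)"
    by simp
qed

lemma is_minkowski_inverse_unique:
  assumes A: "A \<in> carrier_mat m n"
    and X: "is_minkowski_inverse A X" and Y: "is_minkowski_inverse A Y"
  shows "X = Y"
proof -
  have Xc: "X \<in> carrier_mat n m" and Yc: "Y \<in> carrier_mat n m"
    using is_minkowski_inverse_carrier[OF A] X Y by auto
  have "X * (A * Y) = X"
    using mult_eq_if_kernel_subset[OF mink_adj_carrier[OF A] mult_carrier_mat[OF A Yc] Xc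
        is_minkowski_inverseD(2)[OF A Y] is_minkowski_inverseD(3)[OF A X]] .
  moreover have "X * A * Y = Y"
    using mult_eq_if_range_subset[OF mult_carrier_mat[OF Xc A] mink_adj_carrier[OF A] Yc
        is_minkowski_inverseD(1)[OF A X] is_minkowski_inverseD(4)[OF A Y]] .
  ultimately show ?thesis
    using A Xc Yc by simp
qed

lemma mink_inverse_iff:
  assumes A: "A \<in> carrier_mat m n"
  shows "mink_inverse_exists A \<and> X = mink_inverse A \<longleftrightarrow> is_minkowski_inverse A X"
proof -
  have "mink_inverse A = Y" if "is_minkowski_inverse A Y" for Y
    unfolding mink_inverse_def using that is_minkowski_inverse_unique[OF A] by blast
  then show ?thesis
    unfolding mink_inverse_exists_def by blast
qed

lemma is_minkowski_inverse_imp_fixes_vanishes: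
  assumes A: "A \<in> carrier_mat m n" and inv: "is_minkowski_inverse A X"
  shows "\<forall>a \<in> mat_range (mink_adj A). X * A *\<^sub>v a = a"
    and "\<forall>b \<in> mat_kernel (mink_adj A). X *\<^sub>v b = 0\<^sub>v n"
proof -
  have X: "X \<in> carrier_mat n m"
    using is_minkowski_inverse_carrier[OF A inv] .
  show "\<forall>a \<in> mat_range (mink_adj A). X * A *\<^sub>v a = a"
  proof
    fix a assume "a \<in> mat_range (mink_adj A)"
    then obtain y where y: "y \<in> carrier_vec m" "a = mink_adj A *\<^sub>v y"
      using A by (auto elim: mat_rangeE)
    then have "X * A *\<^sub>v a = (X * A * mink_adj A) *\<^sub>v y"
      using assoc_mult_mat_vec[OF mult_carrier_mat[OF X A] mink_adj_carrier[OF A] y(1)] by simp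
    with y is_minkowski_inverseD(1)[OF A inv] show "X * A *\<^sub>v a = a"
      by simp
  qed
  show "\<forall>b \<in> mat_kernel (mink_adj A). X *\<^sub>v b = 0\<^sub>v n"
    using is_minkowski_inverseD(3)[OF A inv] mat_kernelD(2)[OF X] by blast
qed

lemma is_minkowski_inverse_imp_projectors:
  assumes A: "A \<in> carrier_mat m n" and inv: "is_minkowski_inverse A X"
  shows "is_projector m (A * X) (mat_range A) (mat_kernel (mink_adj A))"
    and "is_projector n (X * A) (mat_range X) (mat_kernel A)"
proof -
  have X: "X \<in> carrier_mat n m"
    using is_minkowski_inverse_carrier[OF A inv] .
  have AXA: "A * X * A = A" and XAX: "X * A * X = X" and AX: "mink_adj (A * X) = A * X"
    using inv unfolding is_minkowski_inverse_def by auto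
  note assoc = mult_mat_assoc_dims carrier_matD[OF A] carrier_matD[OF X]
  have AX_idem: "A * X * (A * X) = A * X" and XA_idem: "X * A * (X * A) = X * A"
    using AXA XAX by (simp_all add: assoc)
  have "mat_range A \<subseteq> mat_range (A * X)"
    using mat_range_mult_subset[OF mult_carrier_mat[OF A X] A] AXA by simp
  then have "mat_range (A * X) = mat_range A"
    using mat_range_mult_subset[OF A X] by blast
  moreover have "mat_kernel (A * X) = mat_kernel (mink_adj A)"
  proof
    show "mat_kernel (A * X) \<subseteq> mat_kernel (mink_adj A)"
      using mat_kernel_mult_subset[OF mult_carrier_mat[OF A X] mink_adj_carrier[OF A]]
        is_minkowski_inverseD(2)[OF A inv] by simp
    show "mat_kernel (mink_adj A) \<subseteq> mat_kernel (A * X)"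
      using mat_kernel_mult_subset[OF mink_adj_carrier[OF A] mink_adj_carrier[OF X]]
        mink_adj_mult[OF A X] AX by simp
  qed
  ultimately show "is_projector m (A * X) (mat_range A) (mat_kernel (mink_adj A))"
    using is_projector_range_kernel[OF mult_carrier_mat[OF A X] AX_idem] by simp
  have "mat_range X \<subseteq> mat_range (X * A)"
    using mat_range_mult_subset[OF mult_carrier_mat[OF X A] X] XAX by simp
  then have "mat_range (X * A) = mat_range X"
    using mat_range_mult_subset[OF X A] by blast
  moreover have "mat_kernel (X * A) \<subseteq> mat_kernel A"
    using mat_kernel_mult_subset[OF mult_carrier_mat[OF X A] A] AXA by (simp add: assoc)
  then have "mat_kernel (X * A) = mat_kernel A"
    using mat_kernel_mult_subset[OF A X] by blast
  ultimately show "is_projector n (X * A) (mat_range X) (mat_kernel A)"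
    using is_projector_range_kernel[OF mult_carrier_mat[OF X A] XA_idem] by simp
qed

lemma inner_inverse_if_fixes_mink_adj:
  assumes A: "A \<in> carrier_mat m n" and X: "X \<in> carrier_mat n m"
    and XAB: "X * A * mink_adj A = mink_adj A"
  shows "A * X * A = A" and "mink_adj (X * A) = X * A"
proof -
  note assoc = mult_mat_assoc_dims carrier_matD[OF A] carrier_matD[OF X]
  have "A * (mink_adj A * mink_adj X) = mink_adj (X * A * mink_adj A)"
    using mink_adj_mult[OF mult_carrier_mat[OF X A] mink_adj_carrier[OF A]] mink_adj_mult[OF X A]
    by simp
  then have ABX': "A * (mink_adj A * mink_adj X) = A"
    using XAB by simp
  have "A * X * A = A * (X * A * mink_adj A) * mink_adj X"
    using ABX' by (simp add: assoc)
  with XAB ABX' show "A * X * A = A"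
    by (simp add: assoc)
  have "X * A = X * A * mink_adj A * mink_adj X"
    using ABX' by (simp add: assoc)
  with XAB mink_adj_mult[OF X A] show "mink_adj (X * A) = X * A"
    by simp
qed

lemma mink_adj_factors_through_mult:
  assumes A: "A \<in> carrier_mat m n" and X: "X \<in> carrier_mat n m"
    and AXA: "A * X * A = A" and XAB: "X * A * mink_adj A = mink_adj A"
    and ker: "mat_kernel (mink_adj A) \<subseteq> mat_kernel X"
  obtains W where "W \<in> carrier_mat n m" "mink_adj A * (A * W) = mink_adj A"
proof -
  have B: "mink_adj A \<in> carrier_mat n m"
    using A by simp
  note assoc = mult_mat_assoc_dims carrier_matD[OF A] carrier_matD[OF X]
  have "mat_kernel (mink_adj A * A) \<subseteq> mat_kernel (X * A)"
  proof
    fix v assume "v \<in> mat_kernel (mink_adj A * A)"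
    then have v: "v \<in> carrier_vec n" and "mink_adj A *\<^sub>v (A *\<^sub>v v) = 0\<^sub>v n"
      using mat_kernelD[OF mult_carrier_mat[OF B A]] B A by auto
    then have "A *\<^sub>v v \<in> mat_kernel X"
      using ker mat_kernelI[OF B] A by auto
    then have "X *\<^sub>v (A *\<^sub>v v) = 0\<^sub>v n"
      using mat_kernelD(2)[OF X] by blast
    with v show "v \<in> mat_kernel (X * A)"
      using X A by (intro mat_kernelI[OF mult_carrier_mat[OF X A]]) auto
  qed
  moreover have "X * A * (X * A) = X * A"
    using AXA by (simp add: assoc)
  moreover have "X * A * (mink_adj A * A) = X * A * mink_adj A * A"
    by (simp add: assoc)
  then have "X * A * (mink_adj A * A) = mink_adj A * A"
    using XAB by simp
  ultimately obtain Z where Z: "Z \<in> carrier_mat n n" and BAZ: "mink_adj A * A * Z = X * A"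
    using idempotent_right_factor_if_kernel_subset[OF mult_carrier_mat[OF X A]
        mult_carrier_mat[OF B A]] by blast
  have "mink_adj A * (A * (Z * mink_adj A)) = mink_adj A * A * Z * mink_adj A"
    by (simp add: assoc carrier_matD[OF Z])
  also have "\<dots> = mink_adj A"
    using BAZ XAB by simp
  finally show ?thesis
    using that mult_carrier_mat[OF Z B] by blast
qed

lemma is_minkowski_inverse_if_fixes_vanishes:
  assumes A: "A \<in> carrier_mat m n" and X: "X \<in> carrier_mat n m"
    and fixes_range: "\<forall>a \<in> mat_range (mink_adj A). X * A *\<^sub>v a = a"
    and vanishes: "\<forall>b \<in> mat_kernel (mink_adj A). X *\<^sub>v b = 0\<^sub>v n"
  shows "is_minkowski_inverse A X"
proof -
  have B: "mink_adj A \<in> carrier_mat n m"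
    using A by simp
  have XAB: "X * A * mink_adj A = mink_adj A"
    using mult_eq_if_fixes_range[OF mult_carrier_mat[OF X A] B] fixes_range by blast
  note AXA = inner_inverse_if_fixes_mink_adj(1)[OF A X XAB]
  have ker: "mat_kernel (mink_adj A) \<subseteq> mat_kernel X"
    using vanishes mat_kernelI[OF X] mat_kernelD[OF B] by blast
  obtain W where W: "W \<in> carrier_mat n m" and BAW: "mink_adj A * (A * W) = mink_adj A"
    using mink_adj_factors_through_mult[OF A X AXA XAB ker] .
  note assoc = mult_mat_assoc_dims carrier_matD[OF A] carrier_matD[OF X] carrier_matD[OF W]
  have XAW: "X * (A * W) = X"
    using mult_eq_if_kernel_subset[OF B mult_carrier_mat[OF A W] X BAW ker] .
  have "X * A * X = X * A * X * A * W"
    using XAW by (simp add: assoc)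
  with XAW AXA have XAX: "X * A * X = X"
    by (simp add: assoc)
  have "mink_adj A * (A * X) = mink_adj A * (A * X * A) * W"
    using XAW by (simp add: assoc)
  with AXA BAW have "mink_adj A * (A * X) = mink_adj A"
    by (simp add: assoc)
  then have "mink_adj (A * X) * (A * X) = mink_adj (A * X)"
    using mink_adj_mult[OF A X] by (simp add: assoc)
  then have "mink_adj (A * X) = A * X"
    by (rule mink_adj_eq_if_mink_adj_mult_eq[OF mult_carrier_mat[OF A X]])
  with AXA XAX inner_inverse_if_fixes_mink_adj(2)[OF A X XAB] show ?thesis
    unfolding is_minkowski_inverse_def using A X by simp
qed

lemma is_minkowski_inverse_if_projectors:
  assumes A: "A \<in> carrier_mat m n" and X: "X \<in> carrier_mat n m"
    and proj_AX: "is_projector m (A * X) (mat_range A) (mat_kernel (mink_adj A))"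
    and proj_XA: "is_projector n (X * A) (mat_range X) (mat_kernel A)"
    and range_X: "mat_range X \<subseteq> mat_range (mink_adj A)"
  shows "is_minkowski_inverse A X"
proof -
  have AX: "A * X \<in> carrier_mat m m" and XA: "X * A \<in> carrier_mat n n"
    using A X by simp_all
  note AX_proj = is_projector_imp_idempotent[OF proj_AX]
  note XA_proj = is_projector_imp_idempotent[OF proj_XA]
  have AXA: "A * X * A = A"
    using mult_eq_if_range_subset[OF AX AX A AX_proj(1)] AX_proj(2) by simp
  have XAX: "X * A * X = X"
    using mult_eq_if_range_subset[OF XA XA X XA_proj(1)] XA_proj(2) by simp
  have "mat_kernel (mink_adj A) \<subseteq> mat_kernel (mink_adj X * mink_adj A)"
    using mat_kernel_mult_subset[OF mink_adj_carrier[OF A] mink_adj_carrier[OF X]] .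
  then have "mat_kernel (A * X) \<subseteq> mat_kernel (mink_adj (A * X))"
    using mink_adj_mult[OF A X] AX_proj(3) by simp
  then have AX_adj: "mink_adj (A * X) = A * X"
    by (rule mink_adj_eq_if_idempotent[OF AX AX_proj(1)])
  obtain Y where Y: "Y \<in> carrier_mat m m" and X_eq: "X = mink_adj A * Y"
    using mat_range_subset_factor[OF X mink_adj_carrier[OF A] range_X] .
  have "mink_adj (X * A) = mink_adj A * mink_adj Y * A"
    using mink_adj_mult[OF X A] mink_adj_mult[OF mink_adj_carrier[OF A] Y] X_eq
    by (simp add: mult_mat_assoc_dims carrier_matD[OF A] carrier_matD[OF Y])
  moreover have "mat_kernel A \<subseteq> mat_kernel (mink_adj A * mink_adj Y * A)"
    using mat_kernel_mult_subset[OF A] mink_adj_carrier[OF A] mink_adj_carrier[OF Y]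
    by (meson mult_carrier_mat)
  ultimately have "mat_kernel (X * A) \<subseteq> mat_kernel (mink_adj (X * A))"
    using XA_proj(3) by simp
  then have XA_adj: "mink_adj (X * A) = X * A"
    by (rule mink_adj_eq_if_idempotent[OF XA XA_proj(1)])
  show ?thesis
    unfolding is_minkowski_inverse_def using A X AXA XAX AX_adj XA_adj by simp
qed

theorem theorem5p6:
  fixes A X :: "complex mat" and m n :: nat
  assumes "m > 0" "n > 0"
    and "A \<in> carrier_mat m n" "X \<in> carrier_mat n m"
  shows "((mink_inverse_exists A \<and> X = mink_inverse A) \<longleftrightarrow>
          ((\<forall>a \<in> mat_range (mink_adj A). X * A *\<^sub>v a = a) \<and>
           (\<forall>b \<in> mat_kernel (mink_adj A). X *\<^sub>v b = 0\<^sub>v n)))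
       \<and> ((mink_inverse_exists A \<and> X = mink_inverse A) \<longleftrightarrow>
          (is_projector m (A * X) (mat_range A) (mat_kernel (mink_adj A)) \<and>
           is_projector n (X * A) (mat_range X) (mat_kernel A) \<and>
           mat_range X \<subseteq> mat_range (mink_adj A)))"
  unfolding mink_inverse_iff[OF assms(3)]
  using is_minkowski_inverse_imp_fixes_vanishes[OF assms(3)]
    is_minkowski_inverse_if_fixes_vanishes[OF assms(3,4)]
    is_minkowski_inverse_imp_projectors[OF assms(3)] is_minkowski_inverseD(4)[OF assms(3)]
    is_minkowski_inverse_if_projectors[OF assms(3,4)]
  by blast

end
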